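(* There exist total computable functions $f,g:\omega^2\to\omega$ such that for all $x,y\in\omega$, $x\,E^{ce}_{\mathrm{set}}\,y$ if and only if $f(x,y)\,E^{ce}_3\,g(x,y)$.
   Context: $W_e$ is the $e$-th c.e. set; $A^{[n]}=\{x:\langle x,n\rangle\in A\}$ is the $n$-th column of $A\subseteq\omega$. $i\,E^{ce}_{\mathrm{set}}\,j\iff\{W_i^{[n]}:n\in\omega\}=\{W_j^{[n]}:n\in\omega\}$. $i\,E^{ce}_3\,j\iff$ for every $n$, $W_i^{[n]}\triangle W_j^{[n]}$ is finite. *)

theory Defs
  imports Main "HOL-Library.Nat_Bijection"
begin

text \<open>Kleene partial recursive functions, with programs coded directly by natural
numbers (an acceptable Goedel numbering). A code is prod_encode (tag, payload):
  tag 0: zero function; tag 1: successor of the first argument;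
  tag 2, payload i: projection onto argument i;
  tag 3, payload prod_encode (f, list_encode gs): composition f(g_1(xs),...,g_k(xs));
  tag 4, payload prod_encode (f, g): primitive recursion on the first argument;
  tag 5, payload f: unbounded minimisation.
Codes with other tags denote the empty function.
run e xs v means: program e on input list xs halts with output v.\<close>

inductive run :: "nat \<Rightarrow> nat list \<Rightarrow> nat \<Rightarrow> bool" where
  zero: "run (prod_encode (0, p)) xs 0"
| succ: "run (prod_encode (1, p)) (x # xs) (Suc x)"
| proj: "i < length xs \<Longrightarrow> run (prod_encode (2, i)) xs (xs ! i)"
| comp: "list_all2 (\<lambda>g y. run g xs y) gs ys \<Longrightarrow> run f ys v \<Longrightarrow>
           run (prod_encode (3, prod_encode (f, list_encode gs))) xs v"
| prim0: "run f xs v \<Longrightarrow> run (prod_encode (4, prod_encode (f, g))) (0 # xs) v"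
| primS: "run (prod_encode (4, prod_encode (f, g))) (n # xs) u \<Longrightarrow> run g (n # u # xs) v \<Longrightarrow>
           run (prod_encode (4, prod_encode (f, g))) (Suc n # xs) v"
| mu: "run f (y # xs) 0 \<Longrightarrow> (\<forall>z<y. \<exists>w. run f (z # xs) w \<and> w > 0) \<Longrightarrow>
           run (prod_encode (5, f)) xs y"

definition computable2 :: "(nat \<Rightarrow> nat \<Rightarrow> nat) \<Rightarrow> bool" where
  "computable2 f \<longleftrightarrow> (\<exists>e. \<forall>x y. run e [x, y] (f x y))"

definition W :: "nat \<Rightarrow> nat set" where
  "W e = {x. \<exists>v. run e [x] v}"

definition col :: "nat set \<Rightarrow> nat \<Rightarrow> nat set" where
  "col A n = {x. prod_encode (x, n) \<in> A}"

definition Eset :: "nat \<Rightarrow> nat \<Rightarrow> bool" where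
  "Eset i j \<longleftrightarrow> {col (W i) n | n. True} = {col (W j) n | n. True}"

definition E3 :: "nat \<Rightarrow> nat \<Rightarrow> bool" where
  "E3 i j \<longleftrightarrow> (\<forall>n. finite ((col (W i) n - col (W j) n) \<union> (col (W j) n - col (W i) n)))"

end

theory Submission
  imports Defs
begin

text \<open>Write \<open>A\<^sub>n\<close> and \<open>B\<^sub>m\<close> for the columns of \<open>W x\<close> and \<open>W y\<close>. For each \<open>n\<close> and \<open>s \<in> {0, 1}\<close> let
  \<open>U\<^sub>n\<^sup>s\<close> be the set of pairs \<open>\<langle>y, k\<rangle>\<close> such that \<open>A\<^sub>n\<close> agrees with some \<open>B\<^sub>m\<close>, \<open>m \<le> y\<close>, on all
  numbers below \<open>k + s\<close>; since agreement on finitely many numbers is witnessed at a finite stage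
  of the enumeration, \<open>U\<^sub>n\<^sup>s\<close> is c.e. uniformly in \<open>x, y, n\<close>. Now \<open>U\<^sub>n\<^sup>1 \<subseteq> U\<^sub>n\<^sup>0\<close>, and \<open>U\<^sub>n\<^sup>0 - U\<^sub>n\<^sup>1\<close>
  contains, for every \<open>y\<close>, the pair \<open>\<langle>y, k\<rangle>\<close> with \<open>k\<close> the longest agreement of \<open>A\<^sub>n\<close> with
  \<open>B\<^sub>0, \<dots>, B\<^sub>y\<close> if that is finite, and nothing else. Hence \<open>U\<^sub>n\<^sup>1 \<triangle> U\<^sub>n\<^sup>0\<close> is finite iff \<open>A\<^sub>n\<close>
  equals some \<open>B\<^sub>m\<close>. Putting \<open>U\<^sub>n\<^sup>1\<close> and \<open>U\<^sub>n\<^sup>0\<close>, and their analogues with \<open>x, y\<close> exchanged,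
  into the columns of \<open>W (f x y)\<close> and \<open>W (g x y)\<close> gives the reduction. Effective stages come
  from coding computations as derivations whose validity is decidable, and \<open>f\<close>, \<open>g\<close> from
  the s-m-n construction.\<close>

lemma list_all2_unique:
  "list_all2 (\<lambda>g y. P g y \<and> (\<forall>y'. P g y' \<longrightarrow> y = y')) gs ys \<Longrightarrow> list_all2 P gs ys' \<Longrightarrow> ys' = ys"
  by (induction gs ys arbitrary: ys' rule: list_all2_induct) (auto simp: list_all2_Cons1)

lemma run_det: "run e xs v \<Longrightarrow> run e xs v' \<Longrightarrow> v = v'"
proof (induction e xs v arbitrary: v' rule: run.induct)
  case (comp xs gs ys f v)
  from comp.prems show ?case
  proof (cases rule: run.cases)
    case (comp gs' ys' f')
    then have "gs' = gs" "f' = f" by (auto simp: list_encode_eq)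
    then have "ys' = ys" using list_all2_unique[OF comp.IH(1)] comp by simp
    then show ?thesis using comp.IH(2) comp \<open>f' = f\<close> by blast
  qed simp_all
next
  case (prim0 f xs v g)
  from prim0.prems show ?case by (cases rule: run.cases) (use prim0.IH in simp_all)
next
  case (primS f g n xs u v)
  from primS.prems show ?case
  proof (cases rule: run.cases)
    case (primS f' g' u')
    then show ?thesis using primS.IH by fastforce
  qed simp_all
next
  case (mu f y xs)
  from mu.prems show ?case
  proof (cases rule: run.cases)
    case (mu f')
    then have zero: "run f (v' # xs) 0" and pos: "\<forall>z<v'. \<exists>w. run f (z # xs) w \<and> w > 0" by simp_all
    have "\<not> y < v'" using pos mu.IH(1) by fastforce
    moreover have "\<not> v' < y" using zero mu.IH(2) by fastforce
    ultimately show ?thesis by simp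
  qed simp_all
qed (auto elim: run.cases)

lemma run_comp_iff:
  "run (prod_encode (3, prod_encode (f, list_encode gs))) xs v \<longleftrightarrow>
   (\<exists>ys. list_all2 (\<lambda>g y. run g xs y) gs ys \<and> run f ys v)"
proof
  assume "run (prod_encode (3, prod_encode (f, list_encode gs))) xs v"
  then show "\<exists>ys. list_all2 (\<lambda>g y. run g xs y) gs ys \<and> run f ys v"
    by (cases rule: run.cases) (auto simp: list_encode_eq)
qed (auto intro: run.comp)

section \<open>Total recursive functions\<close>

definition recursive :: "nat \<Rightarrow> (nat list \<Rightarrow> nat) \<Rightarrow> bool" where
  "recursive k F \<longleftrightarrow> (\<exists>e. \<forall>xs. length xs = k \<longrightarrow> run e xs (F xs))"

lemma recursive_cong:
  "recursive k F \<Longrightarrow> k = k' \<Longrightarrow> (\<And>xs. length xs = k' \<Longrightarrow> F xs = G xs) \<Longrightarrow> recursive k' G"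
  unfolding recursive_def by metis

lemma recursive_proj: "i < k \<Longrightarrow> recursive k (\<lambda>xs. xs ! i)"
  unfolding recursive_def by (auto intro!: exI[of _ "prod_encode (2, i)"] run.proj)

lemma recursive_zero: "recursive k (\<lambda>xs. 0)"
  unfolding recursive_def by (auto intro!: exI[of _ "prod_encode (0, 0)"] run.zero)

lemma recursive_Suc_arg: "recursive 1 (\<lambda>xs. Suc (xs ! 0))"
  unfolding recursive_def
  using run.succ[of 0 _ "[]"] by (auto simp: length_Suc_conv intro!: exI[of _ "prod_encode (1, 0)"])

lemma recursive_comp:
  assumes "recursive m H" "\<forall>i<m. recursive k (G i)"
  shows "recursive k (\<lambda>xs. H (map (\<lambda>i. G i xs) [0..<m]))"
proof -
  obtain h where h: "\<forall>xs. length xs = m \<longrightarrow> run h xs (H xs)"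
    using assms(1) recursive_def by auto
  obtain g where g: "\<And>i. i < m \<Longrightarrow> \<forall>xs. length xs = k \<longrightarrow> run (g i) xs (G i xs)"
    using assms(2) unfolding recursive_def by metis
  have "run (prod_encode (3, prod_encode (h, list_encode (map g [0..<m])))) xs
          (H (map (\<lambda>i. G i xs) [0..<m]))" if "length xs = k" for xs
    by (rule run.comp[OF _ h[rule_format]]) (use g that in \<open>auto simp: list_all2_conv_all_nth\<close>)
  then show ?thesis unfolding recursive_def by blast
qed

lemma recursive_prim_rec:
  assumes "recursive k F" "recursive (Suc (Suc k)) G"
  shows "recursive (Suc k) (\<lambda>xs. rec_nat (F (tl xs)) (\<lambda>n acc. G (n # acc # tl xs)) (hd xs))"
proof -
  obtain f where f: "\<forall>xs. length xs = k \<longrightarrow> run f xs (F xs)" using assms(1) recursive_def by auto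
  obtain g where g: "\<forall>xs. length xs = Suc (Suc k) \<longrightarrow> run g xs (G xs)" using assms(2) recursive_def by auto
  have run_pr: "run (prod_encode (4, prod_encode (f, g))) (n # ys)
                  (rec_nat (F ys) (\<lambda>n acc. G (n # acc # ys)) n)" if "length ys = k" for n ys
    by (induction n) (use f g that in \<open>auto intro: run.prim0 run.primS\<close>)
  show ?thesis unfolding recursive_def
    by (rule exI[of _ "prod_encode (4, prod_encode (f, g))"]) (auto simp: length_Suc_conv run_pr)
qed

lemma recursive_comp1: "recursive 1 H \<Longrightarrow> recursive k G \<Longrightarrow> recursive k (\<lambda>xs. H [G xs])"
  using recursive_comp[of 1 H k "\<lambda>i. G"] by simp

lemma recursive_comp2:
  assumes "recursive 2 H" "recursive k G1" "recursive k G2"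
  shows "recursive k (\<lambda>xs. H [G1 xs, G2 xs])"
proof -
  have "recursive k (\<lambda>xs. H (map (\<lambda>i. (if i = 0 then G1 else G2) xs) [0..<2]))"
    by (rule recursive_comp) (use assms in auto)
  then show ?thesis by (simp add: upt_rec)
qed

lemma recursive_Suc: "recursive k f \<Longrightarrow> recursive k (\<lambda>xs. Suc (f xs))"
  using recursive_comp1[OF recursive_Suc_arg] by simp

lemma recursive_const: "recursive k (\<lambda>xs. c)"
  by (induction c) (auto intro: recursive_zero dest: recursive_Suc)

text \<open>The arithmetic operations are instances of \<open>recursive_prim_rec\<close>, whose step function
  reads the counter, the accumulator and the remaining arguments from the list \<open>n # acc # tl xs\<close>.\<close>

lemma recursive_add: "recursive k f \<Longrightarrow> recursive k g \<Longrightarrow> recursive k (\<lambda>xs. f xs + g xs)"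
proof -
  have "recursive (Suc 1) (\<lambda>xs. rec_nat (tl xs ! 0) (\<lambda>n acc. Suc ((n # acc # tl xs) ! 1)) (hd xs))"
    by (intro recursive_prim_rec recursive_Suc recursive_proj) simp_all
  moreover have "rec_nat b (\<lambda>n acc. Suc acc) a = a + b" for a b :: nat by (induction a) auto
  ultimately have "recursive 2 (\<lambda>xs. xs ! 0 + xs ! 1)"
    by (auto simp: numeral_2_eq_2 length_Suc_conv elim!: recursive_cong)
  then show "recursive k f \<Longrightarrow> recursive k g \<Longrightarrow> ?thesis" using recursive_comp2 by fastforce
qed

lemma recursive_mult: "recursive k f \<Longrightarrow> recursive k g \<Longrightarrow> recursive k (\<lambda>xs. f xs * g xs)"
proof -
  have "recursive (Suc 1) (\<lambda>xs. rec_nat 0 (\<lambda>n acc. (n # acc # tl xs) ! 1 + (n # acc # tl xs) ! 2) (hd xs))"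
    by (intro recursive_prim_rec recursive_add recursive_proj recursive_const) simp_all
  moreover have "rec_nat 0 (\<lambda>n acc. acc + b) a = a * b" for a b :: nat by (induction a) auto
  ultimately have "recursive 2 (\<lambda>xs. xs ! 0 * xs ! 1)"
    by (auto simp: numeral_2_eq_2 length_Suc_conv elim!: recursive_cong)
  then show "recursive k f \<Longrightarrow> recursive k g \<Longrightarrow> ?thesis" using recursive_comp2 by fastforce
qed

lemma recursive_pred: "recursive k f \<Longrightarrow> recursive k (\<lambda>xs. f xs - 1)"
proof -
  have "recursive (Suc 0) (\<lambda>xs. rec_nat 0 (\<lambda>n acc. (n # acc # tl xs) ! 0) (hd xs))"
    by (intro recursive_prim_rec recursive_proj recursive_const) simp_all
  moreover have "rec_nat 0 (\<lambda>n acc. n) a = a - 1" for a :: nat by (induction a) auto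
  ultimately have "recursive 1 (\<lambda>xs. xs ! 0 - 1)"
    by (auto simp: length_Suc_conv elim!: recursive_cong)
  then show "recursive k f \<Longrightarrow> ?thesis" using recursive_comp1 by fastforce
qed

lemma recursive_diff: "recursive k f \<Longrightarrow> recursive k g \<Longrightarrow> recursive k (\<lambda>xs. f xs - g xs)"
proof -
  have "recursive (Suc 1) (\<lambda>xs. rec_nat (tl xs ! 0) (\<lambda>n acc. (n # acc # tl xs) ! 1 - 1) (hd xs))"
    by (intro recursive_prim_rec recursive_pred recursive_proj) simp_all
  moreover have "rec_nat a (\<lambda>n acc. acc - 1) b = a - b" for a b :: nat by (induction b) auto
  ultimately have "recursive 2 (\<lambda>xs. xs ! 1 - xs ! 0)"
    by (auto simp: numeral_2_eq_2 length_Suc_conv elim!: recursive_cong)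
  then show "recursive k f \<Longrightarrow> recursive k g \<Longrightarrow> ?thesis"
    using recursive_comp2[of _ k g f] by fastforce
qed

lemma recursive_triangle: "recursive k f \<Longrightarrow> recursive k (\<lambda>xs. triangle (f xs))"
proof -
  have "recursive (Suc 0) (\<lambda>xs. rec_nat 0 (\<lambda>n acc. (n # acc # tl xs) ! 1 + Suc ((n # acc # tl xs) ! 0)) (hd xs))"
    by (intro recursive_prim_rec recursive_add recursive_Suc recursive_proj recursive_const) simp_all
  moreover have "rec_nat 0 (\<lambda>n acc. acc + Suc n) a = triangle a" for a by (induction a) auto
  ultimately have "recursive 1 (\<lambda>xs. triangle (xs ! 0))"
    by (auto simp: length_Suc_conv elim!: recursive_cong)
  then show "recursive k f \<Longrightarrow> ?thesis" using recursive_comp1 by fastforce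
qed

lemma recursive_prod_encode:
  "recursive k f \<Longrightarrow> recursive k g \<Longrightarrow> recursive k (\<lambda>xs. prod_encode (f xs, g xs))"
  unfolding prod_encode_def by (simp add: recursive_add recursive_triangle)

definition recursive_pred :: "nat \<Rightarrow> (nat list \<Rightarrow> bool) \<Rightarrow> bool" where
  "recursive_pred k P \<longleftrightarrow> recursive k (\<lambda>xs. if P xs then 1 else 0)"

lemma recursive_pred_le:
  assumes "recursive k f" "recursive k g"
  shows "recursive_pred k (\<lambda>xs. f xs \<le> g xs)"
proof -
  have "recursive k (\<lambda>xs. 1 - (f xs - g xs))" by (intro recursive_diff recursive_const assms)
  then show ?thesis unfolding recursive_pred_def by (rule recursive_cong) auto
qed

lemma recursive_pred_not: "recursive_pred k P \<Longrightarrow> recursive_pred k (\<lambda>xs. \<not> P xs)"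
  unfolding recursive_pred_def
  by (drule recursive_diff[OF recursive_const[of k 1]]) (auto elim: recursive_cong)

lemma recursive_pred_conj:
  "recursive_pred k P \<Longrightarrow> recursive_pred k Q \<Longrightarrow> recursive_pred k (\<lambda>xs. P xs \<and> Q xs)"
  unfolding recursive_pred_def by (drule (1) recursive_mult) (auto elim: recursive_cong)

lemma recursive_if:
  assumes "recursive_pred k P" "recursive k f" "recursive k g"
  shows "recursive k (\<lambda>xs. if P xs then f xs else g xs)"
proof -
  have "recursive k (\<lambda>xs. (if P xs then 1 else 0) * f xs + (1 - (if P xs then 1 else 0)) * g xs)"
    by (intro recursive_add recursive_mult recursive_diff recursive_const
        assms[unfolded recursive_pred_def] assms)
  then show ?thesis by (rule recursive_cong) auto
qed

text \<open>The inverse of the Cantor pairing, computed by primitive recursion: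
  \<open>prod_decode p = (p - triangle r, r - (p - triangle r))\<close> for the triangular root \<open>r\<close> of \<open>p\<close>.\<close>

definition triangle_root :: "nat \<Rightarrow> nat" where
  "triangle_root p = rec_nat 0 (\<lambda>m r. if triangle (Suc r) \<le> Suc m then Suc r else r) p"

lemma triangle_root_bounds: "triangle (triangle_root p) \<le> p \<and> p < triangle (Suc (triangle_root p))"
  by (induction p) (auto simp: triangle_root_def)

lemma prod_decode_triangle_root:
  "prod_decode p = (p - triangle (triangle_root p), triangle_root p - (p - triangle (triangle_root p)))"
proof -
  let ?a = "p - triangle (triangle_root p)" and ?b = "triangle_root p - (p - triangle (triangle_root p))"
  have "?a \<le> triangle_root p" using triangle_root_bounds[of p] by (simp; arith)
  then have "prod_encode (?a, ?b) = p" unfolding prod_encode_def using triangle_root_bounds[of p] by simp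
  then show ?thesis by (metis prod_encode_inverse)
qed

lemma recursive_triangle_root: "recursive k f \<Longrightarrow> recursive k (\<lambda>xs. triangle_root (f xs))"
proof -
  have "recursive (Suc 0) (\<lambda>xs. rec_nat 0 (\<lambda>n acc. if triangle (Suc ((n # acc # tl xs) ! 1)) \<le> Suc ((n # acc # tl xs) ! 0)
          then Suc ((n # acc # tl xs) ! 1) else (n # acc # tl xs) ! 1) (hd xs))"
    by (intro recursive_prim_rec recursive_if recursive_pred_le recursive_triangle recursive_Suc
        recursive_proj recursive_const) simp_all
  then have "recursive 1 (\<lambda>xs. triangle_root (xs ! 0))"
    by (auto simp: length_Suc_conv triangle_root_def cong: if_cong elim!: recursive_cong)
  then show "recursive k f \<Longrightarrow> ?thesis" using recursive_comp1 by fastforce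
qed

lemma recursive_fst_prod_decode: "recursive k f \<Longrightarrow> recursive k (\<lambda>xs. fst (prod_decode (f xs)))"
  unfolding prod_decode_triangle_root by (simp add: recursive_diff recursive_triangle recursive_triangle_root)

lemma recursive_snd_prod_decode: "recursive k f \<Longrightarrow> recursive k (\<lambda>xs. snd (prod_decode (f xs)))"
  unfolding prod_decode_triangle_root by (simp add: recursive_diff recursive_triangle recursive_triangle_root)


definition recursive1 :: "(nat \<Rightarrow> nat) \<Rightarrow> bool" where
  "recursive1 f \<longleftrightarrow> recursive 1 (\<lambda>xs. f (xs ! 0))"

definition decidable :: "(nat \<Rightarrow> bool) \<Rightarrow> bool" where
  "decidable P \<longleftrightarrow> recursive1 (\<lambda>x. if P x then 1 else 0)"

lemma decidable_iff_recursive_pred: "decidable P \<longleftrightarrow> recursive_pred 1 (\<lambda>xs. P (xs ! 0))"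
  by (simp add: decidable_def recursive1_def recursive_pred_def)

lemma recursive1_id: "recursive1 (\<lambda>x. x)"
  unfolding recursive1_def by (rule recursive_proj) simp

lemma recursive1_const: "recursive1 (\<lambda>x. c)"
  unfolding recursive1_def by (rule recursive_const)

lemma recursive1_Suc: "recursive1 f \<Longrightarrow> recursive1 (\<lambda>x. Suc (f x))"
  unfolding recursive1_def by (rule recursive_Suc)

lemma recursive1_add: "recursive1 f \<Longrightarrow> recursive1 g \<Longrightarrow> recursive1 (\<lambda>x. f x + g x)"
  unfolding recursive1_def by (rule recursive_add)

lemma recursive1_diff: "recursive1 f \<Longrightarrow> recursive1 g \<Longrightarrow> recursive1 (\<lambda>x. f x - g x)"
  unfolding recursive1_def by (rule recursive_diff)

lemma recursive1_prod_encode: "recursive1 f \<Longrightarrow> recursive1 g \<Longrightarrow> recursive1 (\<lambda>x. prod_encode (f x, g x))"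
  unfolding recursive1_def by (rule recursive_prod_encode)

lemma recursive1_fst_prod_decode: "recursive1 f \<Longrightarrow> recursive1 (\<lambda>x. fst (prod_decode (f x)))"
  unfolding recursive1_def by (rule recursive_fst_prod_decode)

lemma recursive1_snd_prod_decode: "recursive1 f \<Longrightarrow> recursive1 (\<lambda>x. snd (prod_decode (f x)))"
  unfolding recursive1_def by (rule recursive_snd_prod_decode)

lemma recursive1_if: "decidable P \<Longrightarrow> recursive1 f \<Longrightarrow> recursive1 g \<Longrightarrow> recursive1 (\<lambda>x. if P x then f x else g x)"
  unfolding recursive1_def decidable_iff_recursive_pred by (rule recursive_if)

lemma recursive1_comp: "recursive1 f \<Longrightarrow> recursive1 g \<Longrightarrow> recursive1 (\<lambda>x. f (g x))"
  unfolding recursive1_def using recursive_comp1 by fastforce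

lemma decidable_comp: "decidable P \<Longrightarrow> recursive1 g \<Longrightarrow> decidable (\<lambda>x. P (g x))"
  unfolding decidable_def using recursive1_comp by fastforce

lemma decidable_le: "recursive1 f \<Longrightarrow> recursive1 g \<Longrightarrow> decidable (\<lambda>x. f x \<le> g x)"
  unfolding recursive1_def decidable_iff_recursive_pred by (rule recursive_pred_le)

lemma decidable_not: "decidable P \<Longrightarrow> decidable (\<lambda>x. \<not> P x)"
  unfolding decidable_iff_recursive_pred by (rule recursive_pred_not)

lemma decidable_conj: "decidable P \<Longrightarrow> decidable Q \<Longrightarrow> decidable (\<lambda>x. P x \<and> Q x)"
  unfolding decidable_iff_recursive_pred by (rule recursive_pred_conj)

lemma decidable_disj: "decidable P \<Longrightarrow> decidable Q \<Longrightarrow> decidable (\<lambda>x. P x \<or> Q x)"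
  using decidable_not[OF decidable_conj[OF decidable_not decidable_not]] by simp

lemma decidable_iff:
  assumes "decidable P" "decidable Q"
  shows "decidable (\<lambda>x. P x \<longleftrightarrow> Q x)"
proof -
  have "decidable (\<lambda>x. P x \<and> Q x \<or> \<not> P x \<and> \<not> Q x)"
    by (intro decidable_disj decidable_conj decidable_not assms)
  moreover have "(\<lambda>x. P x \<longleftrightarrow> Q x) = (\<lambda>x. P x \<and> Q x \<or> \<not> P x \<and> \<not> Q x)" by auto
  ultimately show ?thesis by (simp only:)
qed

lemma decidable_eq: "recursive1 f \<Longrightarrow> recursive1 g \<Longrightarrow> decidable (\<lambda>x. f x = g x)"
  using decidable_conj[OF decidable_le decidable_le] by (simp add: order_eq_iff)

lemma decidable_less: "recursive1 f \<Longrightarrow> recursive1 g \<Longrightarrow> decidable (\<lambda>x. f x < g x)"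
  using decidable_le[OF recursive1_Suc] by (simp add: Suc_le_eq)

abbreviation pfst :: "nat \<Rightarrow> nat" where "pfst p \<equiv> fst (prod_decode p)"
abbreviation psnd :: "nat \<Rightarrow> nat" where "psnd p \<equiv> snd (prod_decode p)"

lemma prod_encode_pfst_psnd [simp]: "prod_encode (pfst p, psnd p) = p"
  by (metis prod.collapse prod_decode_inverse)

text \<open>Parameters of a unary function are passed as one Cantor-paired number; here the step
  function of the recursion receives \<open>\<langle>n, \<langle>acc, x\<rangle>\<rangle>\<close>.\<close>

lemma recursive1_rec_nat:
  assumes base: "recursive1 a" and step: "recursive1 (\<lambda>p. b (pfst p) (pfst (psnd p)) (psnd (psnd p)))"
    and count: "recursive1 n"
  shows "recursive1 (\<lambda>x. rec_nat (a x) (\<lambda>m acc. b m acc x) (n x))"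
proof -
  have "recursive 3 (\<lambda>zs. (\<lambda>p. b (pfst p) (pfst (psnd p)) (psnd (psnd p)))
          ([prod_encode (zs ! 0, prod_encode (zs ! 1, zs ! 2))] ! 0))"
    by (rule recursive_comp1[OF step[unfolded recursive1_def]])
      (intro recursive_prod_encode recursive_proj; simp)
  then have "recursive (Suc (Suc 1)) (\<lambda>zs. b (zs ! 0) (zs ! 1) (zs ! 2))"
    by (simp add: numeral_3_eq_3)
  from recursive_prim_rec[OF base[unfolded recursive1_def] this]
  have "recursive 2 (\<lambda>xs. rec_nat (a (tl xs ! 0)) (\<lambda>m acc. b m acc (tl xs ! 0)) (hd xs))"
    by (simp add: numeral_2_eq_2)
  from recursive_comp2[OF this count[unfolded recursive1_def] recursive_proj[of 0 1]]
  show ?thesis unfolding recursive1_def by simp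
qed

lemma recursive1_funpow:
  assumes "recursive1 h" "recursive1 n" "recursive1 c"
  shows "recursive1 (\<lambda>x. (h ^^ n x) (c x))"
proof -
  have "recursive1 (\<lambda>x. rec_nat (c x) (\<lambda>m acc. h acc) (n x))"
    by (rule recursive1_rec_nat[where b = "\<lambda>m acc x. h acc"])
      (intro recursive1_comp[OF assms(1)] recursive1_fst_prod_decode recursive1_snd_prod_decode
        recursive1_id assms)+
  moreover have "rec_nat c (\<lambda>m acc. h acc) n = (h ^^ n) c" for c n by (induction n) auto
  ultimately show ?thesis by simp
qed

lemma recursive1_sum_lessThan:
  assumes "recursive1 (\<lambda>p. F (pfst p) (psnd p))" "recursive1 B"
  shows "recursive1 (\<lambda>x. \<Sum>z<B x. F z x)"
proof -
  have "recursive1 (\<lambda>p. F (pfst p) (psnd (psnd p)))"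
    using recursive1_comp[OF assms(1), of "\<lambda>p. prod_encode (pfst p, psnd (psnd p))"]
    by (simp add: recursive1_prod_encode recursive1_fst_prod_decode recursive1_snd_prod_decode recursive1_id)
  then have "recursive1 (\<lambda>x. rec_nat 0 (\<lambda>m acc. acc + F m x) (B x))"
    by (intro recursive1_rec_nat[where b = "\<lambda>m acc x. acc + F m x"] recursive1_const recursive1_add
        recursive1_fst_prod_decode recursive1_snd_prod_decode recursive1_id assms(2))
  moreover have "rec_nat 0 (\<lambda>m acc. acc + F m x) n = (\<Sum>z<n. F z x)" for n x by (induction n) auto
  ultimately show ?thesis by simp
qed

lemma decidable_bex_lessThan:
  assumes "decidable (\<lambda>p. P (pfst p) (psnd p))" "recursive1 B"
  shows "decidable (\<lambda>x. \<exists>z<B x. P z x)"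
proof -
  have "decidable (\<lambda>x. 0 < (\<Sum>z<B x. if P z x then 1 else 0 :: nat))"
    by (intro decidable_less recursive1_const recursive1_sum_lessThan)
      (use assms[unfolded decidable_def] in simp_all)
  moreover have "0 < (\<Sum>z<n. if Q z then 1 else 0 :: nat) \<longleftrightarrow> (\<exists>z<n. Q z)" for n :: nat and Q
    by (induction n) (auto simp: less_Suc_eq)
  ultimately show ?thesis by simp
qed

lemma decidable_ball_lessThan:
  assumes "decidable (\<lambda>p. P (pfst p) (psnd p))" "recursive1 B"
  shows "decidable (\<lambda>x. \<forall>z<B x. P z x)"
  using decidable_not[OF decidable_bex_lessThan[OF decidable_not[OF assms(1)] assms(2)]] by simp

lemmas recursive1_intros = recursive1_id recursive1_const recursive1_Suc recursive1_add
  recursive1_diff recursive1_prod_encode recursive1_fst_prod_decode recursive1_snd_prod_decode recursive1_if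
  decidable_le decidable_less decidable_eq decidable_not decidable_conj decidable_disj
  decidable_iff recursive1_sum_lessThan decidable_bex_lessThan decidable_ball_lessThan


section \<open>Arithmetic on codes of lists\<close>

text \<open>Recursive counterparts of \<^const>\<open>list_decode\<close>, acting directly on the code
  \<open>list_encode (x # xs) = Suc (prod_encode (x, list_encode xs))\<close>.\<close>

definition code_hd :: "nat \<Rightarrow> nat" where "code_hd c = pfst (c - 1)"
definition code_tl :: "nat \<Rightarrow> nat" where "code_tl c = psnd (c - 1)"
definition code_Cons :: "nat \<Rightarrow> nat \<Rightarrow> nat" where "code_Cons x c = Suc (prod_encode (x, c))"
definition code_nth :: "nat \<Rightarrow> nat \<Rightarrow> nat" where "code_nth c i = code_hd ((code_tl ^^ i) c)"
text \<open>The length of a list is at most its code, so the sum below counts all non-empty tails.\<close>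

definition code_length :: "nat \<Rightarrow> nat" where
  "code_length c = (\<Sum>i<c. if (code_tl ^^ i) c = 0 then 0 else 1)"

lemma code_Cons_eq_list_encode: "code_Cons x c = list_encode (x # list_decode c)"
  by (simp add: code_Cons_def)

lemma list_decode_code_Cons [simp]: "list_decode (code_Cons x c) = x # list_decode c"
  by (simp add: code_Cons_def)

lemma code_hd_Suc_prod_encode [simp]: "code_hd (Suc (prod_encode (x, c))) = x"
  by (simp add: code_hd_def)

lemma code_tl_Suc_prod_encode [simp]: "code_tl (Suc (prod_encode (x, c))) = c"
  by (simp add: code_tl_def)

lemma list_decode_eq_Nil_iff: "list_decode c = [] \<longleftrightarrow> c = 0"
  by (cases c) (simp_all split: prod.split)

lemma list_decode_code_hd_tl: "c \<noteq> 0 \<Longrightarrow> list_decode c = code_hd c # list_decode (code_tl c)"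
  by (cases c) (auto simp: code_hd_def code_tl_def split: prod.split)

lemma list_decode_funpow_code_tl: "list_decode ((code_tl ^^ i) c) = drop i (list_decode c)"
proof (induction i)
  case (Suc i)
  show ?case
  proof (cases "(code_tl ^^ i) c = 0")
    case True
    moreover have "code_tl 0 = 0"
      by (simp add: code_tl_def prod_decode_def prod_decode_aux.simps)
    ultimately show ?thesis using Suc by (simp add: list_decode_eq_Nil_iff drop_Suc drop_tl)
  next
    case False
    then have "list_decode (code_tl ((code_tl ^^ i) c)) = tl (drop i (list_decode c))"
      using Suc list_decode_code_hd_tl[OF False] by (metis list.sel(3))
    then show ?thesis by (simp add: drop_Suc drop_tl)
  qed
qed simp

lemma funpow_code_tl_eq_0_iff: "(code_tl ^^ i) c = 0 \<longleftrightarrow> length (list_decode c) \<le> i"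
  using list_decode_eq_Nil_iff list_decode_funpow_code_tl by (metis drop_eq_Nil)

lemma length_list_decode_le: "length (list_decode c) \<le> c"
proof (induction c rule: list_decode.induct)
  case (2 n)
  obtain x y where xy: "prod_decode n = (x, y)" by (cases "prod_decode n")
  then have "y \<le> n" by (metis le_prod_encode_2 prod_decode_inverse)
  then show ?case using 2 xy by simp
qed simp

lemma sum_lessThan_count: "(\<Sum>i<n. if i < l then 1 else 0 :: nat) = min l n"
  by (induction n) auto

lemma code_length_eq: "code_length c = length (list_decode c)"
proof -
  have "code_length c = (\<Sum>i<c. if i < length (list_decode c) then 1 else 0)"
    unfolding code_length_def by (intro sum.cong) (auto simp: funpow_code_tl_eq_0_iff)
  also have "\<dots> = min (length (list_decode c)) c"
    by (rule sum_lessThan_count)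
  finally show ?thesis using length_list_decode_le by (simp add: min_absorb1)
qed

lemma code_nth_eq: "i < length (list_decode c) \<Longrightarrow> code_nth c i = list_decode c ! i"
  unfolding code_nth_def
  using list_decode_code_hd_tl[of "(code_tl ^^ i) c"]
  by (metis funpow_code_tl_eq_0_iff list_decode_funpow_code_tl nth_via_drop not_le)

lemma code_length_list_encode [simp]: "code_length (list_encode xs) = length xs"
  by (simp add: code_length_eq)

lemma code_nth_list_encode [simp]: "i < length xs \<Longrightarrow> code_nth (list_encode xs) i = xs ! i"
  by (simp add: code_nth_eq)

lemma recursive1_code_hd: "recursive1 f \<Longrightarrow> recursive1 (\<lambda>x. code_hd (f x))"
  unfolding code_hd_def by (intro recursive1_intros)

lemma recursive1_code_tl: "recursive1 f \<Longrightarrow> recursive1 (\<lambda>x. code_tl (f x))"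
  unfolding code_tl_def by (intro recursive1_intros)

lemma recursive1_code_Cons: "recursive1 f \<Longrightarrow> recursive1 g \<Longrightarrow> recursive1 (\<lambda>x. code_Cons (f x) (g x))"
  unfolding code_Cons_def by (intro recursive1_intros)

lemma recursive1_code_nth: "recursive1 f \<Longrightarrow> recursive1 g \<Longrightarrow> recursive1 (\<lambda>x. code_nth (f x) (g x))"
  unfolding code_nth_def
  by (intro recursive1_code_hd recursive1_funpow recursive1_code_tl[OF recursive1_id])

lemma recursive1_code_length: "recursive1 f \<Longrightarrow> recursive1 (\<lambda>x. code_length (f x))"
proof -
  have "recursive1 code_length" unfolding code_length_def
    by (intro recursive1_intros recursive1_funpow recursive1_code_tl[OF recursive1_id])
  then show "recursive1 f \<Longrightarrow> ?thesis" by (rule recursive1_comp)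
qed

lemmas recursive1_code_intros = recursive1_intros recursive1_code_hd recursive1_code_tl
  recursive1_code_Cons recursive1_code_nth recursive1_code_length


section \<open>Derivations: a decidable stage relation for \<^const>\<open>W\<close>\<close>

text \<open>A node \<open>node e c v\<close> asserts \<open>run e (list_decode c) v\<close>. A derivation is a list of nodes
  each of which follows by one rule of \<^const>\<open>run\<close> from nodes occurring earlier; all quantifiers
  in this condition are bounded, so being (the code of) a derivation is decidable.\<close>

abbreviation node :: "nat \<Rightarrow> nat \<Rightarrow> nat \<Rightarrow> nat" where
  "node e c v \<equiv> prod_encode (e, prod_encode (c, v))"

abbreviation node_prog :: "nat \<Rightarrow> nat" where "node_prog n \<equiv> pfst n"
abbreviation node_input :: "nat \<Rightarrow> nat" where "node_input n \<equiv> pfst (psnd n)"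
abbreviation node_output :: "nat \<Rightarrow> nat" where "node_output n \<equiv> psnd (psnd n)"

abbreviation holds :: "nat \<Rightarrow> bool" where
  "holds n \<equiv> run (node_prog n) (list_decode (node_input n)) (node_output n)"

definition occurs_before :: "(nat \<Rightarrow> nat) \<Rightarrow> nat \<Rightarrow> (nat \<Rightarrow> bool) \<Rightarrow> bool" where
  "occurs_before nd i \<Phi> \<longleftrightarrow> (\<exists>j<i. \<Phi> (nd j))"

definition comp_premises :: "(nat \<Rightarrow> nat) \<Rightarrow> nat \<Rightarrow> nat \<Rightarrow> nat \<Rightarrow> nat \<Rightarrow> bool" where
  "comp_premises nd i p c v \<longleftrightarrow> occurs_before nd i (\<lambda>m. node_prog m = pfst p \<and> node_output m = v
     \<and> code_length (node_input m) = code_length (psnd p)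
     \<and> (\<forall>q<code_length (psnd p).
          occurs_before nd i (\<lambda>m'. m' = node (code_nth (psnd p) q) c (code_nth (node_input m) q))))"

definition prim_rec_premises :: "(nat \<Rightarrow> nat) \<Rightarrow> nat \<Rightarrow> nat \<Rightarrow> nat \<Rightarrow> nat \<Rightarrow> bool" where
  "prim_rec_premises nd i p c v \<longleftrightarrow> c \<noteq> 0 \<and>
     ((code_hd c = 0 \<and> occurs_before nd i (\<lambda>m. m = node (pfst p) (code_tl c) v))
    \<or> (code_hd c \<noteq> 0 \<and> occurs_before nd i (\<lambda>m. node_prog m = prod_encode (4, p)
          \<and> node_input m = code_Cons (code_hd c - 1) (code_tl c)
          \<and> occurs_before nd i (\<lambda>m'.
               m' = node (psnd p) (code_Cons (code_hd c - 1) (code_Cons (node_output m) (code_tl c))) v))))"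

definition mu_premises :: "(nat \<Rightarrow> nat) \<Rightarrow> nat \<Rightarrow> nat \<Rightarrow> nat \<Rightarrow> nat \<Rightarrow> bool" where
  "mu_premises nd i p c v \<longleftrightarrow> occurs_before nd i (\<lambda>m. m = node p (code_Cons v c) 0)
     \<and> (\<forall>z<v. occurs_before nd i (\<lambda>m. node_prog m = p \<and> node_input m = code_Cons z c \<and> 0 < node_output m))"

definition justified :: "(nat \<Rightarrow> nat) \<Rightarrow> nat \<Rightarrow> nat \<Rightarrow> bool" where
  "justified nd i n \<longleftrightarrow>
     (pfst (node_prog n) = 0 \<and> node_output n = 0)
   \<or> (pfst (node_prog n) = 1 \<and> node_input n \<noteq> 0 \<and> node_output n = Suc (code_hd (node_input n)))
   \<or> (pfst (node_prog n) = 2 \<and> psnd (node_prog n) < code_length (node_input n)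
        \<and> node_output n = code_nth (node_input n) (psnd (node_prog n)))
   \<or> (pfst (node_prog n) = 3 \<and> comp_premises nd i (psnd (node_prog n)) (node_input n) (node_output n))
   \<or> (pfst (node_prog n) = 4 \<and> prim_rec_premises nd i (psnd (node_prog n)) (node_input n) (node_output n))
   \<or> (pfst (node_prog n) = 5 \<and> mu_premises nd i (psnd (node_prog n)) (node_input n) (node_output n))"

definition derivation :: "nat list \<Rightarrow> bool" where
  "derivation L \<longleftrightarrow> (\<forall>i<length L. justified ((!) L) i (L ! i))"

definition derivation_code :: "nat \<Rightarrow> bool" where
  "derivation_code d \<longleftrightarrow> (\<forall>i<code_length d. justified (code_nth d) i (code_nth d i))"

definition derivable :: "nat \<Rightarrow> bool" where
  "derivable n \<longleftrightarrow> (\<exists>L. derivation L \<and> n \<in> set L)"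

lemma occurs_before_holds:
  "\<forall>j<i. holds (nd j) \<Longrightarrow> occurs_before nd i \<Phi> \<Longrightarrow> \<exists>m. \<Phi> m \<and> holds m"
  unfolding occurs_before_def by blast

lemma run_comp_if_premises:
  assumes hold: "\<forall>j<i. holds (nd j)" and prem: "comp_premises nd i p c v"
  shows "run (prod_encode (3, p)) (list_decode c) v"
proof -
  obtain m where m: "node_prog m = pfst p" "node_output m = v"
      "code_length (node_input m) = code_length (psnd p)" "holds m"
      "\<forall>q<code_length (psnd p). occurs_before nd i (\<lambda>m'. m' = node (code_nth (psnd p) q) c (code_nth (node_input m) q))"
    using occurs_before_holds[OF hold prem[unfolded comp_premises_def]] by blast
  have "list_all2 (\<lambda>g y. run g (list_decode c) y) (list_decode (psnd p)) (list_decode (node_input m))"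
  proof (rule list_all2_all_nthI)
    fix q assume q: "q < length (list_decode (psnd p))"
    then obtain m' where "m' = node (code_nth (psnd p) q) c (code_nth (node_input m) q)" "holds m'"
      using m(5) occurs_before_holds[OF hold] by (force simp: code_length_eq)
    then show "run (list_decode (psnd p) ! q) (list_decode c) (list_decode (node_input m) ! q)"
      using q m(3) by (simp add: code_nth_eq code_length_eq)
  qed (use m(3) in \<open>simp add: code_length_eq\<close>)
  from run.comp[OF this] m(1,2,4) show ?thesis
    by (metis list_decode_inverse prod_encode_pfst_psnd)
qed

lemma run_prim_rec_if_premises:
  assumes hold: "\<forall>j<i. holds (nd j)" and prem: "prim_rec_premises nd i p c v"
  shows "run (prod_encode (4, p)) (list_decode c) v"
proof -
  have c: "c \<noteq> 0" and dec: "list_decode c = code_hd c # list_decode (code_tl c)"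
    using prem list_decode_code_hd_tl by (auto simp: prim_rec_premises_def)
  have p: "p = prod_encode (pfst p, psnd p)" by simp
  show ?thesis
  proof (cases "code_hd c = 0")
    case True
    then have "run (pfst p) (list_decode (code_tl c)) v"
      using prem occurs_before_holds[OF hold, of "\<lambda>m. m = node (pfst p) (code_tl c) v"]
      by (auto simp: prim_rec_premises_def)
    then show ?thesis using run.prim0[of "pfst p" _ v "psnd p"] dec True by (metis p fst_conv snd_conv prod_encode_inverse)
  next
    case False
    let ?step = "\<lambda>m m'. m' = node (psnd p) (code_Cons (code_hd c - 1) (code_Cons (node_output m) (code_tl c))) v"
    have "occurs_before nd i (\<lambda>m. node_prog m = prod_encode (4, p)
        \<and> node_input m = code_Cons (code_hd c - 1) (code_tl c) \<and> occurs_before nd i (?step m))"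
      using False prem unfolding prim_rec_premises_def by simp
    then obtain m where m: "node_prog m = prod_encode (4, p)"
        "node_input m = code_Cons (code_hd c - 1) (code_tl c)" "holds m" "occurs_before nd i (?step m)"
      using occurs_before_holds[OF hold] by blast
    obtain m' where "m' = node (psnd p) (code_Cons (code_hd c - 1) (code_Cons (node_output m) (code_tl c))) v" "holds m'"
      using occurs_before_holds[OF hold m(4)] by blast
    then have step: "run (psnd p) ((code_hd c - 1) # node_output m # list_decode (code_tl c)) v" by simp
    have "run (prod_encode (4, prod_encode (pfst p, psnd p))) ((code_hd c - 1) # list_decode (code_tl c)) (node_output m)"
      using m(1-3) by simp
    from run.primS[OF this step] show ?thesis using dec False by simp
  qed
qed

lemma run_mu_if_premises:
  assumes hold: "\<forall>j<i. holds (nd j)" and prem: "mu_premises nd i p c v"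
  shows "run (prod_encode (5, p)) (list_decode c) v"
proof (rule run.mu)
  show "run p (v # list_decode c) 0"
    using prem occurs_before_holds[OF hold] by (fastforce simp: mu_premises_def)
  show "\<forall>z<v. \<exists>w. run p (z # list_decode c) w \<and> 0 < w"
    using prem occurs_before_holds[OF hold] by (fastforce simp: mu_premises_def)
qed

lemma holds_if_justified:
  assumes hold: "\<forall>j<i. holds (nd j)" and just: "justified nd i n"
  shows "holds n"
proof -
  have prog: "node_prog n = prod_encode (pfst (node_prog n), psnd (node_prog n))" by simp
  from just show ?thesis unfolding justified_def
  proof (elim disjE conjE)
    assume "pfst (node_prog n) = 1" "node_input n \<noteq> 0" "node_output n = Suc (code_hd (node_input n))"
    then show ?thesis using prog list_decode_code_hd_tl run.succ by metis
  next
    assume "pfst (node_prog n) = 2" "psnd (node_prog n) < code_length (node_input n)"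
      "node_output n = code_nth (node_input n) (psnd (node_prog n))"
    then show ?thesis using prog run.proj by (metis code_length_eq code_nth_eq)
  qed (use prog run.zero run_comp_if_premises[OF hold] run_prim_rec_if_premises[OF hold]
         run_mu_if_premises[OF hold] in metis)+
qed

lemma holds_code_nth:
  assumes "derivation_code d"
  shows "i < code_length d \<Longrightarrow> holds (code_nth d i)"
proof (induction i rule: less_induct)
  case (less i)
  show ?case
    by (rule holds_if_justified[of i "code_nth d"]) (use less assms in \<open>auto simp: derivation_code_def\<close>)
qed

lemma occurs_before_mono: "occurs_before nd i \<Phi> \<Longrightarrow> (\<And>m. \<Phi> m \<Longrightarrow> \<Psi> m) \<Longrightarrow> occurs_before nd i \<Psi>"
  unfolding occurs_before_def by blast

lemma justified_mono:
  assumes h: "\<And>\<Phi>. occurs_before nd i \<Phi> \<Longrightarrow> occurs_before nd' i' \<Phi>" and "justified nd i n"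
  shows "justified nd' i' n"
proof -
  have transfer: "occurs_before nd' i' \<Psi>" if "occurs_before nd i \<Phi>" "\<And>m. \<Phi> m \<Longrightarrow> \<Psi> m" for \<Phi> \<Psi>
    using h occurs_before_mono that by metis
  have "comp_premises nd i p c v \<Longrightarrow> comp_premises nd' i' p c v" for p c v
    unfolding comp_premises_def by (erule transfer) (auto intro: h)
  moreover have "prim_rec_premises nd i p c v \<Longrightarrow> prim_rec_premises nd' i' p c v" for p c v
    unfolding prim_rec_premises_def
    by (elim conjE disjE) (simp add: h, simp, erule transfer, simp add: h)
  moreover have "mu_premises nd i p c v \<Longrightarrow> mu_premises nd' i' p c v" for p c v
    unfolding mu_premises_def by (simp add: h)
  ultimately show ?thesis using assms(2) unfolding justified_def by blast
qed

lemma justified_cong: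
  "(\<And>j. j < i \<Longrightarrow> nd j = nd' j) \<Longrightarrow> justified nd i n \<longleftrightarrow> justified nd' i n"
  by (rule iffI; erule justified_mono[rotated]) (auto simp: occurs_before_def)

lemma occurs_before_nth_length: "occurs_before ((!) L) (length L) \<Phi> \<longleftrightarrow> (\<exists>m\<in>set L. \<Phi> m)"
  unfolding occurs_before_def by (metis in_set_conv_nth)

lemma derivation_code_list_encode: "derivation_code (list_encode L) \<longleftrightarrow> derivation L"
proof -
  have "justified (code_nth (list_encode L)) i n \<longleftrightarrow> justified ((!) L) i n" if "i < length L" for i n
    using that by (intro justified_cong) simp
  then show ?thesis unfolding derivation_code_def derivation_def by simp
qed

lemma derivation_append:
  assumes "derivation L1" "derivation L2"
  shows "derivation (L1 @ L2)"
  unfolding derivation_def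
proof (intro allI impI)
  fix i assume i: "i < length (L1 @ L2)"
  show "justified ((!) (L1 @ L2)) i ((L1 @ L2) ! i)"
  proof (cases "i < length L1")
    case True
    have "justified ((!) L1) i (L1 ! i)" using assms(1) True by (simp add: derivation_def)
    moreover have "justified ((!) (L1 @ L2)) i n \<longleftrightarrow> justified ((!) L1) i n" for n
      using True by (intro justified_cong) (simp add: nth_append)
    ultimately show ?thesis using True by (simp add: nth_append)
  next
    case False
    let ?i = "i - length L1"
    have "justified ((!) L2) ?i (L2 ! ?i)" using assms(2) False i by (simp add: derivation_def)
    then have "justified ((!) (L1 @ L2)) i (L2 ! ?i)"
    proof (rule justified_mono[rotated])
      fix \<Phi> assume "occurs_before ((!) L2) ?i \<Phi>"
      then obtain j where "j < ?i" "\<Phi> (L2 ! j)" by (auto simp: occurs_before_def)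
      then show "occurs_before ((!) (L1 @ L2)) i \<Phi>" unfolding occurs_before_def
        by (intro exI[of _ "j + length L1"]) (auto simp: nth_append)
    qed
    then show ?thesis using False by (simp add: nth_append)
  qed
qed

lemma derivation_snoc:
  assumes "derivation L" "justified ((!) L) (length L) n"
  shows "derivation (L @ [n])"
proof -
  have "justified ((!) (L @ [n])) i m \<longleftrightarrow> justified ((!) L) i m" if "i \<le> length L" for i m
    using that by (intro justified_cong) (simp add: nth_append)
  then show ?thesis
    using assms unfolding derivation_def by (simp add: nth_append less_Suc_eq)
qed

lemma ex_derivation_containing:
  "finite S \<Longrightarrow> \<forall>n\<in>S. derivable n \<Longrightarrow> \<exists>L. derivation L \<and> S \<subseteq> set L"
proof (induction S rule: finite_induct)
  case empty
  show ?case by (rule exI[of _ "[]"]) (simp add: derivation_def)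
next
  case (insert n S)
  then obtain L1 L2 where "derivation L1" "S \<subseteq> set L1" "derivation L2" "n \<in> set L2"
    by (auto simp: derivable_def)
  then show ?case by (intro exI[of _ "L1 @ L2"]) (auto intro: derivation_append)
qed

lemma derivable_by_rule:
  assumes "finite S" "\<forall>m\<in>S. derivable m"
    and "\<And>L. S \<subseteq> set L \<Longrightarrow> justified ((!) L) (length L) n"
  shows "derivable n"
proof -
  obtain L where "derivation L" "S \<subseteq> set L" using ex_derivation_containing assms(1,2) by blast
  then have "derivation (L @ [n])" using assms(3) derivation_snoc by blast
  then show ?thesis unfolding derivable_def by auto
qed

lemma derivable_comp:
  assumes gs: "list_all2 (\<lambda>g y. derivable (node g (list_encode xs) y)) gs ys"
    and f: "derivable (node f (list_encode ys) v)"
  shows "derivable (node (prod_encode (3, prod_encode (f, list_encode gs))) (list_encode xs) v)"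
proof -
  have len: "length ys = length gs" using list_all2_lengthD[OF gs] by simp
  let ?S = "insert (node f (list_encode ys) v) ((\<lambda>q. node (gs ! q) (list_encode xs) (ys ! q)) ` {..<length gs})"
  show ?thesis
  proof (rule derivable_by_rule[of ?S])
    show "\<forall>m\<in>?S. derivable m" using gs f by (auto simp: list_all2_conv_all_nth)
  next
    fix L assume "?S \<subseteq> set L"
    then show "justified ((!) L) (length L) (node (prod_encode (3, prod_encode (f, list_encode gs))) (list_encode xs) v)"
      unfolding justified_def comp_premises_def occurs_before_nth_length
      using len by (auto intro!: bexI[of _ "node f (list_encode ys) v"])
  qed simp
qed

lemma derivable_mu:
  assumes zero: "derivable (node f (list_encode (y # xs)) 0)"
    and pos: "\<forall>z<y. \<exists>w. derivable (node f (list_encode (z # xs)) w) \<and> 0 < w"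
  shows "derivable (node (prod_encode (5, f)) (list_encode xs) y)"
proof -
  obtain w where w: "\<And>z. z < y \<Longrightarrow> derivable (node f (list_encode (z # xs)) (w z)) \<and> 0 < w z"
    using pos by metis
  let ?S = "insert (node f (list_encode (y # xs)) 0) ((\<lambda>z. node f (list_encode (z # xs)) (w z)) ` {..<y})"
  show ?thesis
  proof (rule derivable_by_rule[of ?S])
    show "\<forall>m\<in>?S. derivable m" using zero w by auto
  next
    fix L assume S: "?S \<subseteq> set L"
    have "\<exists>m\<in>set L. node_prog m = f \<and> node_input m = code_Cons z (list_encode xs) \<and> 0 < node_output m"
      if "z < y" for z
      using S w[OF that] that
      by (intro bexI[of _ "node f (list_encode (z # xs)) (w z)"]) (auto simp: code_Cons_eq_list_encode)
    then show "justified ((!) L) (length L) (node (prod_encode (5, f)) (list_encode xs) y)"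
      unfolding justified_def mu_premises_def occurs_before_nth_length
      using S by (auto simp: code_Cons_eq_list_encode)
  qed simp
qed

lemma derivable_if_run: "run e xs v \<Longrightarrow> derivable (node e (list_encode xs) v)"
proof (induction e xs v rule: run.induct)
  case (proj i xs)
  show ?case by (rule derivable_by_rule[of "{}"]) (use proj in \<open>auto simp: justified_def\<close>)
next
  case (comp xs gs ys f v)
  show ?case by (rule derivable_comp[OF list_all2_mono[OF comp.IH(1)] comp.IH(2)]) simp
next
  case (prim0 f xs v g)
  show ?case
    by (rule derivable_by_rule[of "{node f (list_encode xs) v}"])
      (use prim0.IH in \<open>auto simp: justified_def prim_rec_premises_def occurs_before_nth_length\<close>)
next
  case (primS f g n xs u v)
  let ?prev = "node (prod_encode (4, prod_encode (f, g))) (list_encode (n # xs)) u"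
  show ?case
  proof (rule derivable_by_rule[of "{?prev, node g (list_encode (n # u # xs)) v}"])
    fix L assume "{?prev, node g (list_encode (n # u # xs)) v} \<subseteq> set L"
    then show "justified ((!) L) (length L) (node (prod_encode (4, prod_encode (f, g))) (list_encode (Suc n # xs)) v)"
      unfolding justified_def prim_rec_premises_def occurs_before_nth_length
      by (auto intro!: bexI[of _ ?prev] simp: code_Cons_eq_list_encode)
  qed (use primS.IH in auto)
next
  case (mu f y xs)
  then show ?case by (intro derivable_mu) auto
qed (rule derivable_by_rule[of "{}"]; auto simp: justified_def)+

definition halts_within :: "nat \<Rightarrow> nat \<Rightarrow> nat \<Rightarrow> bool" where
  "halts_within t e z \<longleftrightarrow> (\<exists>d<t. derivation_code d \<and>
     (\<exists>i<code_length d. node_prog (code_nth d i) = e \<and> node_input (code_nth d i) = code_Cons z 0))"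

lemma halts_within_mono: "halts_within t e z \<Longrightarrow> t \<le> t' \<Longrightarrow> halts_within t' e z"
  unfolding halts_within_def by (blast intro: less_le_trans)

lemma W_iff_halts_within: "z \<in> W e \<longleftrightarrow> (\<exists>t. halts_within t e z)"
proof
  assume "z \<in> W e"
  then obtain v where "run e [z] v" by (auto simp: W_def)
  then obtain L where L: "derivation L" "node e (list_encode [z]) v \<in> set L"
    using derivable_if_run unfolding derivable_def by blast
  then obtain i where "i < length L" "L ! i = node e (list_encode [z]) v"
    by (auto simp: in_set_conv_nth)
  then have "halts_within (Suc (list_encode L)) e z"
    using L(1) unfolding halts_within_def
    by (intro exI[of _ "list_encode L"]) (auto simp: derivation_code_list_encode code_Cons_def)
  then show "\<exists>t. halts_within t e z" by blast
next
  assume "\<exists>t. halts_within t e z"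
  then obtain d i where "derivation_code d" "i < code_length d" "node_prog (code_nth d i) = e"
      "node_input (code_nth d i) = code_Cons z 0"
    by (auto simp: halts_within_def)
  then have "run e [z] (node_output (code_nth d i))" using holds_code_nth[of d i] by simp
  then show "z \<in> W e" by (auto simp: W_def)
qed

lemma decidable_halts_within:
  assumes "recursive1 f" "recursive1 g" "recursive1 h"
  shows "decidable (\<lambda>x. halts_within (f x) (g x) (h x))"
proof -
  have "decidable (\<lambda>x. halts_within (pfst x) (pfst (psnd x)) (psnd (psnd x)))"
    unfolding halts_within_def derivation_code_def justified_def comp_premises_def
      prim_rec_premises_def mu_premises_def occurs_before_def
    by (intro recursive1_code_intros)
  from decidable_comp[OF this recursive1_prod_encode[OF assms(1) recursive1_prod_encode[OF assms(2,3)]]]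
  show ?thesis by simp
qed


section \<open>Programs with prescribed domains\<close>

lemma ex_program_halts_iff:
  assumes "decidable (\<lambda>p. R (pfst p) (psnd p))"
  shows "\<exists>M. \<forall>q. (\<exists>v. run M [q] v) \<longleftrightarrow> (\<exists>t. R t q)"
proof -
  have "recursive 2 (\<lambda>xs. 1 - (\<lambda>ys. (\<lambda>p. if R (pfst p) (psnd p) then 1 else 0) (ys ! 0))
          [prod_encode (xs ! 0, xs ! 1)])"
    by (intro recursive_diff recursive_const recursive_comp1 recursive_prod_encode recursive_proj)
      (use assms[unfolded decidable_def recursive1_def] in simp_all)
  then obtain F where F2: "\<And>xs. length xs = 2 \<Longrightarrow>
      run F xs (1 - (if R (xs ! 0) (xs ! 1) then 1 else 0))"
    unfolding recursive_def by auto
  have F: "run F [t, q] (if R t q then 0 else 1)" for t q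
    using F2[of "[t, q]"] by (cases "R t q") simp_all
  have F_eq: "run F [t, q] r \<Longrightarrow> r = (if R t q then 0 else 1)" for t q r using run_det[OF F] by simp
  show ?thesis
  proof (rule exI[of _ "prod_encode (5, F)"], intro allI iffI)
    fix q assume "\<exists>v. run (prod_encode (5, F)) [q] v"
    then obtain v where "run (prod_encode (5, F)) [q] v" by blast
    then have "run F [v, q] 0" by (cases rule: run.cases) auto
    then show "\<exists>t. R t q" using F_eq by (metis zero_neq_one)
  next
    fix q assume "\<exists>t. R t q"
    then have "R (LEAST t. R t q) q" by (rule LeastI_ex)
    moreover have "\<forall>z<(LEAST t. R t q). \<exists>w. run F [z, q] w \<and> 0 < w"
      using F not_less_Least by fastforce
    ultimately show "\<exists>v. run (prod_encode (5, F)) [q] v" using F by (metis run.mu)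
  qed
qed

lemma ex_pairing_program: "\<exists>P. \<forall>a b. run P [a, b] (prod_encode (a, b))"
proof -
  have "recursive 2 (\<lambda>xs. prod_encode (xs ! 0, xs ! 1))"
    by (intro recursive_prod_encode recursive_proj) simp_all
  then show ?thesis unfolding recursive_def
    by (metis length_Cons list.size(3) nth_Cons_0 nth_Cons_Suc numeral_2_eq_2 One_nat_def)
qed

definition const_prog :: "nat \<Rightarrow> nat" where
  "const_prog n = ((\<lambda>c. prod_encode (3, prod_encode (prod_encode (1, 0), list_encode [c]))) ^^ n) (prod_encode (0, 0))"

lemma run_const_prog: "run (const_prog n) xs n"
proof (induction n)
  case 0 then show ?case by (simp add: const_prog_def run.zero del: prod_encode_eq)
next
  case (Suc n)
  have "run (prod_encode (3, prod_encode (prod_encode (1, 0), list_encode [const_prog n]))) xs (Suc n)"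
    by (rule run.comp[of _ _ "[n]"]) (use Suc run.succ[of 0 n "[]"] in auto)
  then show ?case by (simp add: const_prog_def)
qed

text \<open>The s-m-n construction: a program for \<open>z \<mapsto> M \<langle>z, p\<rangle>\<close>, given a program \<open>P\<close> for the pairing.\<close>

definition fix_param :: "nat \<Rightarrow> nat \<Rightarrow> nat \<Rightarrow> nat" where
  "fix_param M P p = prod_encode (3, prod_encode (M,
     list_encode [prod_encode (3, prod_encode (P, list_encode [prod_encode (2, 0), const_prog p]))]))"

lemma W_fix_param:
  assumes P: "\<forall>a b. run P [a, b] (prod_encode (a, b))"
  shows "z \<in> W (fix_param M P p) \<longleftrightarrow> (\<exists>v. run M [prod_encode (z, p)] v)"
proof -
  define Q where "Q = prod_encode (3, prod_encode (P, list_encode [prod_encode (2, 0), const_prog p]))"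
  have proj: "run (prod_encode (2, 0)) [z] r \<longleftrightarrow> r = z" for r
    using run.proj[of 0 "[z]"] run_det by fastforce
  have Q: "run Q [z] r \<longleftrightarrow> r = prod_encode (z, p)" for r
  proof
    assume "run Q [z] r"
    then obtain ys where ys: "list_all2 (\<lambda>g y. run g [z] y) [prod_encode (2, 0), const_prog p] ys" "run P ys r"
      unfolding Q_def run_comp_iff by blast
    then have "ys = [z, p]" using proj run_const_prog run_det by (auto simp: list_all2_Cons1)
    then show "r = prod_encode (z, p)" using ys(2) P run_det by blast
  next
    assume "r = prod_encode (z, p)"
    then show "run Q [z] r" unfolding Q_def
      by (intro run.comp[of _ _ "[z, p]"]) (use P proj run_const_prog in auto)
  qed
  have fix_eq: "fix_param M P p = prod_encode (3, prod_encode (M, list_encode [Q]))"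
    by (simp add: fix_param_def Q_def)
  show ?thesis unfolding W_def mem_Collect_eq fix_eq run_comp_iff using Q by (auto simp: list_all2_Cons1)
qed

lemma recursive1_fix_param: "recursive1 (fix_param M P)"
  unfolding fix_param_def const_prog_def by (simp; intro recursive1_code_intros recursive1_funpow)

lemma computable2_prod_encode: "recursive1 f \<Longrightarrow> computable2 (\<lambda>x y. f (prod_encode (x, y)))"
proof -
  assume "recursive1 f"
  then have "recursive 2 (\<lambda>xs. (\<lambda>ys. f (ys ! 0)) [prod_encode (xs ! 0, xs ! 1)])"
    unfolding recursive1_def by (intro recursive_comp1 recursive_prod_encode recursive_proj) simp_all
  then show ?thesis unfolding computable2_def recursive_def
    by (metis length_Cons list.size(3) nth_Cons_0 nth_Cons_Suc numeral_2_eq_2 One_nat_def)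
qed


section \<open>Agreement of columns\<close>

definition boundary :: "(nat \<Rightarrow> nat \<Rightarrow> bool) \<Rightarrow> (nat \<times> nat) set" where
  "boundary Q = {(y, k). (\<exists>m\<le>y. Q m k) \<and> \<not> (\<exists>m\<le>y. Q m (Suc k))}"

lemma boundary_row_nonempty:
  assumes antimono: "\<And>m j j'. Q m j \<Longrightarrow> j' \<le> j \<Longrightarrow> Q m j'" and base: "\<And>m. Q m 0"
    and partial: "\<And>m. \<exists>j. \<not> Q m j"
  shows "\<exists>k. (y, k) \<in> boundary Q"
proof -
  obtain J where J: "\<And>m. \<not> Q m (J m)" using partial by metis
  have "\<not> Q m (Max (J ` {..y}))" if "m \<le> y" for m
  proof
    assume "Q m (Max (J ` {..y}))"
    moreover have "J m \<le> Max (J ` {..y})" using that by simp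
    ultimately show False using J[of m] antimono by blast
  qed
  then have ex: "\<exists>K. \<not> (\<exists>m\<le>y. Q m K)" by blast
  define K where "K = (LEAST K. \<not> (\<exists>m\<le>y. Q m K))"
  have "\<not> (\<exists>m\<le>y. Q m K)" unfolding K_def by (rule LeastI_ex[OF ex])
  moreover have "K \<noteq> 0" using calculation base[of 0] by (metis le0)
  moreover have "\<exists>m\<le>y. Q m (K - 1)"
    using not_less_Least[of "K - 1" "\<lambda>K. \<not> (\<exists>m\<le>y. Q m K)"] \<open>K \<noteq> 0\<close> unfolding K_def by simp
  ultimately have "(y, K - 1) \<in> boundary Q" unfolding boundary_def by simp
  then show ?thesis ..
qed

lemma finite_boundary_row:
  assumes antimono: "\<And>m j j'. Q m j \<Longrightarrow> j' \<le> j \<Longrightarrow> Q m j'"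
  shows "finite {k. (y, k) \<in> boundary Q}"
proof (cases "\<exists>K. \<not> (\<exists>m\<le>y. Q m K)")
  case True
  then obtain K where K: "\<not> (\<exists>m\<le>y. Q m K)" by blast
  have "{k. (y, k) \<in> boundary Q} \<subseteq> {..<K}"
  proof
    fix k assume "k \<in> {k. (y, k) \<in> boundary Q}"
    then obtain m where "m \<le> y" "Q m k" unfolding boundary_def by blast
    then have "\<not> K \<le> k" using K antimono[of m k K] by blast
    then show "k \<in> {..<K}" by simp
  qed
  then show ?thesis by (rule finite_subset) simp
next
  case False
  then have "{k. (y, k) \<in> boundary Q} = {}" unfolding boundary_def by simp
  then show ?thesis by (simp only: finite.emptyI)
qed

lemma finite_boundary_iff:
  assumes antimono: "\<And>m j j'. Q m j \<Longrightarrow> j' \<le> j \<Longrightarrow> Q m j'" and base: "\<And>m. Q m 0"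
  shows "finite (boundary Q) \<longleftrightarrow> (\<exists>m. \<forall>j. Q m j)"
proof
  assume fin: "finite (boundary Q)"
  show "\<exists>m. \<forall>j. Q m j"
  proof (rule ccontr)
    assume "\<nexists>m. \<forall>j. Q m j"
    then have partial: "\<And>m. \<exists>j. \<not> Q m j" by blast
    have "\<forall>y. \<exists>k. (y, k) \<in> boundary Q"
      by (intro allI boundary_row_nonempty[of Q]) (fact antimono base partial)+
    then obtain k where "\<forall>y. (y, k y) \<in> boundary Q" by (rule choice[THEN exE])
    then have "range (\<lambda>y. (y, k y)) \<subseteq> boundary Q" by blast
    then have "finite (range (\<lambda>y. (y, k y)))" using fin by (rule finite_subset)
    moreover have "inj (\<lambda>y. (y, k y))" by (simp add: inj_on_def)
    ultimately show False using finite_imageD by blast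
  qed
next
  assume "\<exists>m. \<forall>j. Q m j"
  then obtain m0 where m0: "\<And>j. Q m0 j" by blast
  have "boundary Q \<subseteq> Sigma {..<m0} (\<lambda>y. {k. (y, k) \<in> boundary Q})"
  proof
    fix x assume x: "x \<in> boundary Q"
    then obtain y k where "x = (y, k)" "\<not> (\<exists>m\<le>y. Q m (Suc k))" unfolding boundary_def by blast
    moreover have "\<not> m0 \<le> y" using calculation(2) m0 by blast
    ultimately show "x \<in> Sigma {..<m0} (\<lambda>y. {k. (y, k) \<in> boundary Q})" using x by simp
  qed
  moreover have "finite {k. (y, k) \<in> boundary Q}" for y
    by (rule finite_boundary_row) (fact antimono)
  ultimately show "finite (boundary Q)" by (meson finite_SigmaI finite_lessThan finite_subset)
qed

definition agree_at :: "nat \<Rightarrow> nat \<Rightarrow> nat \<Rightarrow> nat \<Rightarrow> nat \<Rightarrow> nat \<Rightarrow> bool" where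
  "agree_at t a b n m j \<longleftrightarrow>
     j \<le> t \<and> (\<forall>u<j. halts_within t a (prod_encode (u, n)) \<longleftrightarrow> halts_within t b (prod_encode (u, m)))"

definition agree_below :: "nat \<Rightarrow> nat \<Rightarrow> nat \<Rightarrow> nat \<Rightarrow> nat \<Rightarrow> bool" where
  "agree_below a b n m j \<longleftrightarrow> (\<exists>t. agree_at t a b n m j)"

lemma agree_below_antimono: "agree_below a b n m j \<Longrightarrow> j' \<le> j \<Longrightarrow> agree_below a b n m j'"
  unfolding agree_below_def agree_at_def by (auto intro: le_trans)

lemma agree_below_0: "agree_below a b n m 0"
  unfolding agree_below_def agree_at_def by simp

lemma halts_within_eventually:
  "\<exists>T. \<forall>u<(j::nat). \<forall>t\<ge>T. halts_within t e (g u) \<longleftrightarrow> g u \<in> W e"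
proof (induction j)
  case (Suc j)
  then obtain T where T: "\<forall>u<j. \<forall>t\<ge>T. halts_within t e (g u) \<longleftrightarrow> g u \<in> W e" by blast
  have "\<exists>T'. \<forall>t\<ge>T'. halts_within t e (g j) \<longleftrightarrow> g j \<in> W e"
  proof (cases "g j \<in> W e")
    case True
    then obtain T' where "halts_within T' e (g j)" using W_iff_halts_within by blast
    then show ?thesis using True halts_within_mono by blast
  qed (use W_iff_halts_within in blast)
  then obtain T' where "\<forall>t\<ge>T'. halts_within t e (g j) \<longleftrightarrow> g j \<in> W e" ..
  then show ?case using T by (intro exI[of _ "max T T'"]) (auto simp: less_Suc_eq)
qed simp

text \<open>The bound \<open>j \<le> t\<close> in \<^const>\<open>agree_at\<close> is what makes agreement below every length
  exclude a disagreement, however late it is enumerated.\<close>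

lemma all_agree_below_iff: "(\<forall>j. agree_below a b n m j) \<longleftrightarrow> col (W a) n = col (W b) m"
proof
  assume eq: "col (W a) n = col (W b) m"
  show "\<forall>j. agree_below a b n m j"
  proof
    fix j
    obtain T1 where T1: "\<forall>u<j. \<forall>t\<ge>T1. halts_within t a (prod_encode (u, n)) \<longleftrightarrow> prod_encode (u, n) \<in> W a"
      using halts_within_eventually[of j a "\<lambda>u. prod_encode (u, n)"] by blast
    obtain T2 where T2: "\<forall>u<j. \<forall>t\<ge>T2. halts_within t b (prod_encode (u, m)) \<longleftrightarrow> prod_encode (u, m) \<in> W b"
      using halts_within_eventually[of j b "\<lambda>u. prod_encode (u, m)"] by blast
    have "prod_encode (u, n) \<in> W a \<longleftrightarrow> prod_encode (u, m) \<in> W b" for u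
      using eq unfolding col_def by blast
    then have "agree_at (max j (max T1 T2)) a b n m j"
      unfolding agree_at_def by (simp add: T1 T2)
    then show "agree_below a b n m j" unfolding agree_below_def by blast
  qed
next
  assume all: "\<forall>j. agree_below a b n m j"
  show "col (W a) n = col (W b) m"
  proof (rule ccontr)
    assume "col (W a) n \<noteq> col (W b) m"
    then obtain u where u: "prod_encode (u, n) \<in> W a \<longleftrightarrow> prod_encode (u, m) \<notin> W b"
      unfolding col_def by blast
    then obtain t0 where t0: "halts_within t0 a (prod_encode (u, n)) \<or> halts_within t0 b (prod_encode (u, m))"
      using W_iff_halts_within by blast
    obtain t where t: "agree_at t a b n m (Suc (max u t0))" using all unfolding agree_below_def by blast
    then have "t0 \<le> t" "halts_within t a (prod_encode (u, n)) \<longleftrightarrow> halts_within t b (prod_encode (u, m))"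
      unfolding agree_at_def by auto
    then have "halts_within t a (prod_encode (u, n)) \<and> halts_within t b (prod_encode (u, m))"
      using t0 halts_within_mono by blast
    then show False using u W_iff_halts_within by blast
  qed
qed

definition agreement_col :: "nat \<Rightarrow> nat \<Rightarrow> nat \<Rightarrow> nat \<Rightarrow> nat set" where
  "agreement_col a b n s = {w. \<exists>m\<le>pfst w. agree_below a b n m (psnd w + s)}"

lemma Collect_pfst_psnd_eq_image: "{w. P (pfst w) (psnd w)} = prod_encode ` {(y, k). P y k}"
proof (intro set_eqI iffI)
  fix w assume "w \<in> {w. P (pfst w) (psnd w)}"
  then show "w \<in> prod_encode ` {(y, k). P y k}" by (intro image_eqI[of _ _ "prod_decode w"]) auto
qed auto

lemma finite_agreement_col_diff_iff:
  "finite ((agreement_col a b n 1 - agreement_col a b n 0) \<union> (agreement_col a b n 0 - agreement_col a b n 1))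
     \<longleftrightarrow> (\<exists>m. col (W a) n = col (W b) m)"
proof -
  have up: "agreement_col a b n 1 - agreement_col a b n 0 = {}"
    unfolding Diff_eq_empty_iff agreement_col_def by (auto dest: agree_below_antimono[OF _ le_SucI[OF order_refl]])
  have down: "agreement_col a b n 0 - agreement_col a b n 1 = prod_encode ` boundary (agree_below a b n)"
    unfolding Collect_pfst_psnd_eq_image[symmetric] agreement_col_def boundary_def by auto
  have "finite (prod_encode ` boundary (agree_below a b n)) \<longleftrightarrow> finite (boundary (agree_below a b n))"
    by (rule finite_image_iff) (simp add: inj_on_def)
  also have "\<dots> \<longleftrightarrow> (\<exists>m. \<forall>j. agree_below a b n m j)"
    by (rule finite_boundary_iff) (use agree_below_antimono agree_below_0 in blast)+
  finally show ?thesis unfolding up down Un_empty_left all_agree_below_iff .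
qed


definition select_arg :: "nat \<Rightarrow> nat \<Rightarrow> nat \<Rightarrow> nat" where
  "select_arg i x y = (if i = 0 then x else y)"

lemma Eset_iff_select_arg:
  "Eset x y \<longleftrightarrow> (\<forall>c. \<exists>m. col (W (select_arg (pfst c) x y)) (psnd c) = col (W (select_arg (pfst c) y x)) m)"
proof -
  have "Eset x y \<longleftrightarrow> (\<forall>n. \<exists>m. col (W x) n = col (W y) m) \<and> (\<forall>n. \<exists>m. col (W y) n = col (W x) m)"
    unfolding Eset_def by (auto simp: set_eq_iff)
  also have "\<dots> \<longleftrightarrow> (\<forall>c. \<exists>m. col (W (select_arg (pfst c) x y)) (psnd c) = col (W (select_arg (pfst c) y x)) m)"
  proof
    assume "\<forall>c. \<exists>m. col (W (select_arg (pfst c) x y)) (psnd c) = col (W (select_arg (pfst c) y x)) m"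
    from this[rule_format, of "prod_encode (0, _)"] this[rule_format, of "prod_encode (1, _)"]
    show "(\<forall>n. \<exists>m. col (W x) n = col (W y) m) \<and> (\<forall>n. \<exists>m. col (W y) n = col (W x) m)"
      by (simp add: select_arg_def)
  qed (simp add: select_arg_def)
  finally show ?thesis .
qed

text \<open>The stage relation of the reduction, on \<open>q = \<langle>\<langle>w, c\<rangle>, \<langle>x, y\<rangle>\<rangle>\<close> with \<open>c = \<langle>i, n\<rangle>\<close>:
  \<open>i\<close> selects whether column \<open>n\<close> of \<open>W x\<close> is matched against the columns of \<open>W y\<close> or
  vice versa.\<close>

definition column_stage :: "nat \<Rightarrow> nat \<Rightarrow> nat \<Rightarrow> bool" where
  "column_stage s t q \<longleftrightarrow> (\<exists>m\<le>pfst (pfst (pfst q)).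
     agree_at t (select_arg (pfst (psnd (pfst q))) (pfst (psnd q)) (psnd (psnd q)))
       (select_arg (pfst (psnd (pfst q))) (psnd (psnd q)) (pfst (psnd q)))
       (psnd (psnd (pfst q))) m (psnd (pfst (pfst q)) + s))"

lemma decidable_column_stage: "decidable (\<lambda>p. column_stage s (pfst p) (psnd p))"
  unfolding column_stage_def agree_at_def select_arg_def less_Suc_eq_le[symmetric]
  by (intro recursive1_code_intros decidable_halts_within)

lemma ex_column_stage_iff:
  "(\<exists>t. column_stage s t (prod_encode (prod_encode (w, c), prod_encode (x, y))))
     \<longleftrightarrow> w \<in> agreement_col (select_arg (pfst c) x y) (select_arg (pfst c) y x) (psnd c) s"
  unfolding column_stage_def agreement_col_def agree_below_def by auto

theorem proposition2p7:
  shows "\<exists>f g. computable2 f \<and> computable2 g \<and>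
           (\<forall>x y. Eset x y \<longleftrightarrow> E3 (f x y) (g x y))"
proof -
  obtain P where P: "\<forall>a b. run P [a, b] (prod_encode (a, b))" using ex_pairing_program by blast
  have "\<exists>M. \<forall>q. (\<exists>v. run M [q] v) \<longleftrightarrow> (\<exists>t. column_stage s t q)" for s
    by (rule ex_program_halts_iff[OF decidable_column_stage])
  then obtain M where M: "\<And>s q. (\<exists>v. run (M s) [q] v) \<longleftrightarrow> (\<exists>t. column_stage s t q)" by metis
  define f where "f = (\<lambda>x y. fix_param (M 1) P (prod_encode (x, y)))"
  define g where "g = (\<lambda>x y. fix_param (M 0) P (prod_encode (x, y)))"
  have col_f: "col (W (f x y)) c = agreement_col (select_arg (pfst c) x y) (select_arg (pfst c) y x) (psnd c) 1"
    and col_g: "col (W (g x y)) c = agreement_col (select_arg (pfst c) x y) (select_arg (pfst c) y x) (psnd c) 0"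
    for x y c by (simp_all add: f_def g_def col_def W_fix_param[OF P] M ex_column_stage_iff)
  have "Eset x y \<longleftrightarrow> E3 (f x y) (g x y)" for x y
    unfolding E3_def col_f col_g finite_agreement_col_diff_iff Eset_iff_select_arg ..
  moreover have "computable2 f" "computable2 g"
    unfolding f_def g_def by (intro computable2_prod_encode recursive1_fix_param)+
  ultimately show ?thesis by blast
qed

end
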